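(* Let $m=m(n)$ be a function of $n$. (i) Suppose that $\frac{4n}{m}=\log n+\omega$, where $\omega=\omega(n)\rightarrow\infty$ as $n\rightarrow\infty$. Then asymptotically almost surely $G(n,m,2)$ is connected. (ii) Suppose that $\frac{4n}{m}=\log n-\omega$, where $\omega=\omega(n)\rightarrow\infty$ as $n\rightarrow\infty$. Then asymptotically almost surely $G(n,m,2)$ is not connected.
   Context: The uniform random intersection graph $G(n,m,k)$ (for positive integers $k\le m$) is the random graph on a set $V$ of $n$ nodes defined as follows: fix a set $M$ of $m$ colours; to each node $v\in V$ assign a subset $F_v\subseteq M$ of exactly $k$ distinct colours, chosen uniformly at random among all $k$-subsets of $M$, independently for different nodes; distinct nodes $u,v$ are joined by an edge if and only if $F_u\cap F_v\neq\emptyset$. Here $k=2$. An event holds asymptotically almost surely if its probability tends to $1$ as $n\rightarrow\infty$. Here $\log$ denotes the natural logarithm. *)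

theory Defs
  imports "HOL-Probability.Probability"
begin

definition colour_assignments :: "nat \<Rightarrow> nat \<Rightarrow> nat \<Rightarrow> (nat \<Rightarrow> nat set) set" where
  "colour_assignments n m k = PiE {..<n} (\<lambda>_. {S. S \<subseteq> {..<m} \<and> card S = k})"

text \<open>Uniform random intersection graph G(n,m,k), represented by its colour assignment.\<close>
definition RIG :: "nat \<Rightarrow> nat \<Rightarrow> nat \<Rightarrow> (nat \<Rightarrow> nat set) pmf" where
  "RIG n m k = pmf_of_set (colour_assignments n m k)"

definition rig_edges :: "nat \<Rightarrow> (nat \<Rightarrow> nat set) \<Rightarrow> (nat \<times> nat) set" where
  "rig_edges n F = {(u, v). u < n \<and> v < n \<and> u \<noteq> v \<and> F u \<inter> F v \<noteq> {}}"

definition graph_connected :: "'a set \<Rightarrow> ('a \<times> 'a) set \<Rightarrow> bool" where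
  "graph_connected V E \<longleftrightarrow> (\<forall>u\<in>V. \<forall>v\<in>V. (u, v) \<in> E\<^sup>*)"

definition rig_connected :: "nat \<Rightarrow> (nat \<Rightarrow> nat set) \<Rightarrow> bool" where
  "rig_connected n F \<longleftrightarrow> graph_connected {..<n} (rig_edges n F)"

end

theory Submission
  imports Defs "HOL-Real_Asymp.Real_Asymp"
begin

text \<open>
  If G(n,m,2) is disconnected, some union of components has a colour set A with
  2 \<le> |A| = a \<le> m/2 that is closed: every vertex has both colours inside A or both outside,
  and at least \<lceil>a/2\<rceil> vertices have their colours inside A. A union bound over A and these
  vertices gives a sum whose a-th term is at most 2e^3 q(a)^(a-1), where
  q(a) = e^2 sqrt(2en/a) exp(-2(n/m)(1 - a/m)). The rate q is log-convex in a,
  so it is largest at a = 2 or a = m/2, and at both ends it tends to 0 once 4n/m - log n \<rightarrow> \<infinity>.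

  The number X of isolated vertices satisfies E X^2 / (E X)^2 \<rightarrow> 1 when
  log n - 4n/m \<rightarrow> \<infinity>, so by the second moment method X > 0, and the graph is disconnected, a.a.s.
\<close>

section \<open>Binomial and exponential estimates\<close>

lemma real_choose_two: "real (n choose 2) = real n * (real n - 1) / 2"
proof (induction n)
  case (Suc n)
  have "Suc n choose 2 = n + (n choose 2)"
    using binomial_Suc_Suc[of n 1] by (simp only: numeral_2_eq_2 One_nat_def binomial_1)
  then show ?case using Suc by (simp add: field_simps)
qed simp

lemma binomial_le_pow_div_fact: "real (m choose a) \<le> real m ^ a / fact a"
proof -
  have "real (m choose a) * fact a \<le> real m ^ a"
    using binomial_fact_pow[of m a] by (metis of_nat_fact of_nat_le_iff of_nat_mult of_nat_power)
  then show ?thesis by (simp add: field_simps)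
qed

lemma pow_div_fact_le_exp:
  fixes x :: real
  assumes "0 \<le> x"
  shows "x ^ k / fact k \<le> exp x"
proof -
  have "(\<lambda>j. x ^ j / fact j) sums exp x"
    using exp_converges[of x] by (simp add: divide_inverse mult.commute)
  moreover have "(\<Sum>j\<in>{k}. x ^ j / fact j) \<le> (\<Sum>j. x ^ j / fact j)"
    using assms summable_exp[of x] by (intro sum_le_suminf) (auto simp: divide_inverse mult.commute)
  ultimately show ?thesis by (simp add: sums_iff)
qed

lemma binomial_le_en_over_k_pow_k:
  assumes "0 < k"
  shows "real (n choose k) \<le> (exp 1 * real n / real k) ^ k"
proof -
  have "real (n choose k) \<le> (real n / real k) ^ k * (real k ^ k / fact k)"
    using binomial_le_pow_div_fact[of n k] assms by (simp add: power_divide)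
  also have "\<dots> \<le> (real n / real k) ^ k * exp (real k)"
    by (intro mult_left_mono pow_div_fact_le_exp) auto
  also have "\<dots> = (exp 1 * real n / real k) ^ k"
    by (simp add: power_mult_distrib exp_of_nat_mult[symmetric] power_divide)
  finally show ?thesis .
qed

lemma choose_two_ratio_le:
  assumes "2 \<le> a" "a \<le> m"
  shows "real (a choose 2) / real (m choose 2) \<le> (real a / real m) ^ 2"
proof -
  have "(real a - 1) * real m \<le> real a * (real m - 1)" using assms by (simp add: algebra_simps)
  then have "real a * ((real a - 1) * real m) * real m \<le> real a * (real a * (real m - 1)) * real m"
    by (intro mult_right_mono mult_left_mono) auto
  then show ?thesis using assms by (simp add: real_choose_two field_simps power2_eq_square)
qed

lemma choose_two_split_ratio:
  assumes "a \<le> m" "2 \<le> m"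
  shows "real ((a choose 2) + ((m - a) choose 2)) / real (m choose 2)
         = 1 - 2 * real a * (real m - real a) / (real m * (real m - 1))"
  using assms by (simp add: real_choose_two of_nat_diff field_simps)

lemma choose_two_mul_le_sq:
  assumes "4 \<le> m"
  shows "real (m choose 2) * real ((m - 4) choose 2) \<le> (real ((m - 2) choose 2))\<^sup>2"
proof -
  have diff: "real (m - 4) = real m - 4" "real (m - 2) = real m - 2" using assms by auto
  define x where "x = real m * real m - 5 * real m"
  have x: "-4 \<le> x"
  proof -
    have "0 \<le> (real m - 4) * (real m - 1)" using assms by simp
    then show ?thesis unfolding x_def by (simp add: algebra_simps)
  qed
  have "real (m choose 2) * real ((m - 4) choose 2) = x * (x + 4) / 4"
    unfolding real_choose_two diff x_def by (simp add: field_simps)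
  also have "\<dots> \<le> (x + 6)\<^sup>2 / 4" using x by (simp add: power2_eq_square algebra_simps)
  also have "\<dots> = (real ((m - 2) choose 2))\<^sup>2"
    unfolding real_choose_two diff x_def by (simp add: field_simps power2_eq_square)
  finally show ?thesis .
qed

lemma choose_two_shift_ratio:
  assumes "4 \<le> m"
  shows "real (m choose 2) / real ((m - 2) choose 2) = real m * (real m - 1) / ((real m - 2) * (real m - 3))"
proof -
  have "(real m - 2) * (real m - 3) \<noteq> 0" using assms by simp
  then show ?thesis using assms by (simp add: real_choose_two of_nat_diff field_simps)
qed

lemma choose_two_shift_ratio_sub_one_le:
  fixes M :: real
  assumes "6 \<le> M"
  shows "M * (M - 1) / ((M - 2) * (M - 3)) - 1 \<le> 4 / M + 56 / M\<^sup>2"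
proof -
  have pos: "0 < (M - 2) * (M - 3)" "0 < M" using assms by auto
  have "0 \<le> (M - 6)\<^sup>2" by simp
  then have "(4 * M - 6) * M\<^sup>2 \<le> (4 * M + 56) * ((M - 2) * (M - 3))"
    using assms by (simp add: power2_eq_square algebra_simps)
  then have "(4 * M - 6) / ((M - 2) * (M - 3)) \<le> (4 * M + 56) / M\<^sup>2"
    using pos by (simp add: divide_simps)
  moreover have "M * (M - 1) / ((M - 2) * (M - 3)) - 1 = (4 * M - 6) / ((M - 2) * (M - 3))"
    using pos by (simp add: field_simps)
  moreover have "(4 * M + 56) / M\<^sup>2 = 4 / M + 56 / M\<^sup>2"
    using pos by (simp add: field_simps power2_eq_square)
  ultimately show ?thesis by simp
qed

lemma sum_power_pred_le:
  fixes Q :: real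
  assumes "0 \<le> Q" "Q \<le> 1 / 2"
  shows "(\<Sum>a=2..M. Q ^ (a - 1)) \<le> 2 * Q"
proof -
  have telescoped: "(\<Sum>a=2..M. Q ^ (a - 1)) \<le> 2 * Q - 2 * Q ^ M" if "1 \<le> M" for M
    using that
  proof (induction M rule: dec_induct)
    case (step M)
    have "2 * Q * Q ^ M \<le> 1 * Q ^ M" using assms by (intro mult_right_mono) auto
    moreover have "{2..Suc M} = insert (Suc M) {2..M}" using step by auto
    ultimately show ?case using step by simp
  qed simp
  show ?thesis
  proof (cases "1 \<le> M")
    case True
    then show ?thesis using telescoped[OF True] zero_le_power[of Q M] assms by linarith
  qed (use assms in simp)
qed

section \<open>The uniform colour space\<close>

definition colour_sets :: "nat \<Rightarrow> nat \<Rightarrow> nat set set" where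
  "colour_sets m k = {S. S \<subseteq> {..<m} \<and> card S = k}"

lemma finite_colour_sets: "finite (colour_sets m k)"
  unfolding colour_sets_def by (rule finite_subset[of _ "Pow {..<m}"]) auto

lemma card_colour_sets: "card (colour_sets m k) = m choose k"
  unfolding colour_sets_def using n_subsets[of "{..<m}" k] by simp

lemma colour_sets_nonempty:
  assumes "k \<le> m" shows "colour_sets m k \<noteq> {}"
proof -
  have "{..<k} \<in> colour_sets m k" using assms unfolding colour_sets_def by auto
  then show ?thesis by blast
qed

lemma colour_assignments_eq_PiE: "colour_assignments n m k = PiE {..<n} (\<lambda>_. colour_sets m k)"
  unfolding colour_assignments_def colour_sets_def ..

lemma colour_assignmentsD:
  assumes "F \<in> colour_assignments n m k" "v < n"
  shows "F v \<subseteq> {..<m}" "card (F v) = k"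
  using assms unfolding colour_assignments_def by (auto simp: PiE_def Pi_def)

lemma finite_colour_assignments: "finite (colour_assignments n m k)"
  unfolding colour_assignments_eq_PiE by (intro finite_PiE finite_colour_sets) auto

lemma card_colour_assignments: "card (colour_assignments n m k) = (m choose k) ^ n"
  unfolding colour_assignments_eq_PiE by (simp add: card_PiE card_colour_sets)

lemma colour_assignments_nonempty: "k \<le> m \<Longrightarrow> colour_assignments n m k \<noteq> {}"
  unfolding colour_assignments_eq_PiE using colour_sets_nonempty by (simp add: PiE_eq_empty_iff)

lemma prob_RIG:
  assumes "k \<le> m"
  shows "measure_pmf.prob (RIG n m k) P =
    card (colour_assignments n m k \<inter> P) / card (colour_assignments n m k)"
  unfolding RIG_def using finite_colour_assignments colour_assignments_nonempty[OF assms]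
  by (simp add: measure_pmf_of_set)

lemma prob_Collect_eq_1_minus:
  "measure_pmf.prob p {x. P x} = 1 - measure_pmf.prob p {x. \<not> P x}"
proof -
  have "{x. P x} = space (measure_pmf p) - {x. \<not> P x}" by auto
  then show ?thesis using measure_pmf.prob_compl[of "{x. \<not> P x}" p] by simp
qed

lemma card_colour_assignments_restrict:
  "card (colour_assignments n m k \<inter> {F. \<forall>v<n. F v \<in> X v}) = (\<Prod>v<n. card (colour_sets m k \<inter> X v))"
proof -
  have "colour_assignments n m k \<inter> {F. \<forall>v<n. F v \<in> X v} = PiE {..<n} (\<lambda>v. colour_sets m k \<inter> X v)"
    unfolding colour_assignments_eq_PiE by (auto simp: PiE_def Pi_def)
  then show ?thesis by (simp add: card_PiE)
qed

lemma card_colour_sets_within: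
  assumes "A \<subseteq> {..<m}"
  shows "card (colour_sets m k \<inter> {S. S \<subseteq> A}) = card A choose k"
proof -
  have "colour_sets m k \<inter> {S. S \<subseteq> A} = {S. S \<subseteq> A \<and> card S = k}"
    using assms unfolding colour_sets_def by auto
  moreover have "finite A" using assms finite_subset by blast
  ultimately show ?thesis by (simp add: n_subsets)
qed

lemma card_colour_sets_avoiding:
  assumes "A \<subseteq> {..<m}"
  shows "card (colour_sets m k \<inter> {S. S \<inter> A = {}}) = (m - card A) choose k"
proof -
  have "colour_sets m k \<inter> {S. S \<inter> A = {}} = {S. S \<subseteq> {..<m} - A \<and> card S = k}"
    unfolding colour_sets_def by auto
  moreover have "card ({..<m} - A) = m - card A"
    using assms by (simp add: card_Diff_subset finite_subset)
  ultimately show ?thesis by (simp add: n_subsets)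
qed

lemma card_colour_sets_within_or_avoiding:
  assumes "A \<subseteq> {..<m}" "0 < k"
  shows "card (colour_sets m k \<inter> {S. S \<subseteq> A \<or> S \<inter> A = {}}) = (card A choose k) + ((m - card A) choose k)"
proof -
  have "colour_sets m k \<inter> {S. S \<subseteq> A \<or> S \<inter> A = {}} =
      (colour_sets m k \<inter> {S. S \<subseteq> A}) \<union> (colour_sets m k \<inter> {S. S \<inter> A = {}})" by auto
  moreover have "(colour_sets m k \<inter> {S. S \<subseteq> A}) \<inter> (colour_sets m k \<inter> {S. S \<inter> A = {}}) = {}"
    using assms(2) unfolding colour_sets_def by (auto simp: Int_absorb2)
  ultimately show ?thesis
    using finite_colour_sets card_colour_sets_within[OF assms(1)] card_colour_sets_avoiding[OF assms(1)]
    by (simp add: card_Un_disjoint)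
qed

section \<open>Disconnection forces a closed colour class\<close>

definition cut_event :: "nat \<Rightarrow> nat set \<Rightarrow> nat set \<Rightarrow> (nat \<Rightarrow> nat set) set" where
  "cut_event n A T =
     {F. \<forall>v<n. if v \<in> T then F v \<subseteq> A else F v \<subseteq> A \<or> F v \<inter> A = {}}"

lemma colour_class_imp_cut_event:
  assumes F: "F \<in> colour_assignments n m 2" and S: "S \<subseteq> {..<n}" "u \<in> S"
    and closed: "\<And>w v. w \<in> S \<Longrightarrow> v < n \<Longrightarrow> v \<notin> S \<Longrightarrow> F w \<inter> F v = {}"
  defines "A \<equiv> \<Union>(F ` S)"
  shows "\<exists>T. T \<subseteq> {..<n} \<and> card T = (card A + 1) div 2 \<and> 2 \<le> card A \<and> F \<in> cut_event n A T"
proof -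
  have "finite S" using S finite_subset by blast
  have A_sub: "A \<subseteq> {..<m}" using colour_assignmentsD[OF F] S unfolding A_def by blast
  have "card A \<le> (\<Sum>w\<in>S. card (F w))" unfolding A_def by (rule card_UN_le[OF \<open>finite S\<close>])
  also have "\<dots> = (\<Sum>w\<in>S. 2)" using colour_assignmentsD(2)[OF F] S by (intro sum.cong) auto
  finally have "(card A + 1) div 2 \<le> card S" by simp
  then obtain T where T: "T \<subseteq> S" "card T = (card A + 1) div 2"
    using obtain_subset_with_card_n by metis
  have "card (F u) \<le> card A"
    using S A_sub unfolding A_def by (intro card_mono) (auto intro: finite_subset)
  then have "2 \<le> card A" using colour_assignmentsD(2)[OF F, of u] S by auto
  moreover have "F \<in> cut_event n A T"
    unfolding cut_event_def A_def using T closed by auto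
  ultimately show ?thesis using T S by blast
qed

lemma disconnected_imp_cut_event:
  assumes F: "F \<in> colour_assignments n m 2" and "\<not> rig_connected n F"
  shows "\<exists>A T. A \<subseteq> {..<m} \<and> 2 \<le> card A \<and> 2 * card A \<le> m \<and>
           T \<subseteq> {..<n} \<and> card T = (card A + 1) div 2 \<and> F \<in> cut_event n A T"
proof -
  let ?E = "rig_edges n F"
  obtain u v where uv: "u < n" "v < n" "(u, v) \<notin> ?E\<^sup>*"
    using assms(2) unfolding rig_connected_def graph_connected_def by auto
  define S where "S = {w. w < n \<and> (u, w) \<in> ?E\<^sup>*}"
  define R where "R = {..<n} - S"
  have closed_S: "F w \<inter> F x = {}" if "w \<in> S" "x < n" "x \<notin> S" for w x
  proof (rule ccontr)
    assume "F w \<inter> F x \<noteq> {}"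
    then have "(w, x) \<in> ?E" using that unfolding rig_edges_def S_def by auto
    then show False using that unfolding S_def by (auto intro: rtrancl_into_rtrancl)
  qed
  have closed_R: "F w \<inter> F x = {}" if "w \<in> R" "x < n" "x \<notin> R" for w x
    using closed_S[of x w] that unfolding R_def by auto
  have S: "S \<subseteq> {..<n}" "u \<in> S" and R: "R \<subseteq> {..<n}" "v \<in> R"
    unfolding R_def S_def using uv by auto
  have colours: "\<Union>(F ` S) \<subseteq> {..<m}" "\<Union>(F ` R) \<subseteq> {..<m}"
    using colour_assignmentsD(1)[OF F] S R by blast+
  moreover have "\<Union>(F ` S) \<inter> \<Union>(F ` R) = {}" using closed_S unfolding R_def by blast
  ultimately have "card (\<Union>(F ` S)) + card (\<Union>(F ` R)) = card (\<Union>(F ` S) \<union> \<Union>(F ` R))"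
    by (intro card_Un_disjoint[symmetric]) (auto intro: finite_subset)
  also have "\<dots> \<le> m" using colours card_mono[of "{..<m}"] by fastforce
  finally have "card (\<Union>(F ` S)) + card (\<Union>(F ` R)) \<le> m" .
  then have "2 * card (\<Union>(F ` S)) \<le> m \<or> 2 * card (\<Union>(F ` R)) \<le> m" by linarith
  then consider "2 * card (\<Union>(F ` S)) \<le> m" | "2 * card (\<Union>(F ` R)) \<le> m" by blast
  then show ?thesis
  proof cases
    case 1 then show ?thesis
      using colour_class_imp_cut_event[OF F S closed_S] colours by blast
  next
    case 2 then show ?thesis
      using colour_class_imp_cut_event[OF F R closed_R] colours by blast
  qed
qed

lemma card_cut_event:
  assumes A: "A \<subseteq> {..<m}" and T: "T \<subseteq> {..<n}"
  shows "card (colour_assignments n m 2 \<inter> cut_event n A T) =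
     (card A choose 2) ^ card T * ((card A choose 2) + ((m - card A) choose 2)) ^ (n - card T)"
proof -
  let ?X = "\<lambda>v. if v \<in> T then {S. S \<subseteq> A} else {S. S \<subseteq> A \<or> S \<inter> A = {}}"
  let ?c = "\<lambda>v. card (colour_sets m 2 \<inter> ?X v)"
  have "cut_event n A T = {F. \<forall>v<n. F v \<in> ?X v}" unfolding cut_event_def by simp
  then have "card (colour_assignments n m 2 \<inter> cut_event n A T) = (\<Prod>v<n. ?c v)"
    by (simp add: card_colour_assignments_restrict)
  also have "\<dots> = (\<Prod>v\<in>{..<n} - T. ?c v) * (\<Prod>v\<in>T. ?c v)"
    by (rule prod.subset_diff[OF T finite_lessThan])
  also have "(\<Prod>v\<in>{..<n} - T. ?c v) = (\<Prod>v\<in>{..<n} - T. (card A choose 2) + ((m - card A) choose 2))"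
    by (intro prod.cong) (auto simp: card_colour_sets_within_or_avoiding[OF A])
  also have "(\<Prod>v\<in>T. ?c v) = (\<Prod>v\<in>T. card A choose 2)"
    by (intro prod.cong) (auto simp: card_colour_sets_within[OF A])
  finally show ?thesis using T by (simp add: card_Diff_subset finite_subset mult.commute)
qed

lemma card_disconnected_le:
  "card (colour_assignments n m 2 \<inter> {F. \<not> rig_connected n F}) \<le>
    (\<Sum>a=2..m div 2. (m choose a) * (n choose ((a + 1) div 2)) *
       ((a choose 2) ^ ((a + 1) div 2) * ((a choose 2) + ((m - a) choose 2)) ^ (n - (a + 1) div 2)))"
proof -
  let ?\<Omega> = "colour_assignments n m 2"
  let ?k = "\<lambda>a. (a + 1) div 2"
  define As where "As a = {A. A \<subseteq> {..<m} \<and> card A = a}" for a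
  define Ts where "Ts a = {T. T \<subseteq> {..<n} \<and> card T = ?k a}" for a
  let ?cut = "\<lambda>a. (a choose 2) ^ ?k a * ((a choose 2) + ((m - a) choose 2)) ^ (n - ?k a)"
  have fin: "finite (As a)" "finite (Ts a)" for a
    unfolding As_def Ts_def by simp_all
  have "?\<Omega> \<inter> {F. \<not> rig_connected n F} \<subseteq>
      (\<Union>a\<in>{2..m div 2}. \<Union>A\<in>As a. \<Union>T\<in>Ts a. ?\<Omega> \<inter> cut_event n A T)"
  proof
    fix F assume F: "F \<in> ?\<Omega> \<inter> {F. \<not> rig_connected n F}"
    then obtain A T where "A \<subseteq> {..<m}" "2 \<le> card A" "2 * card A \<le> m"
      "T \<subseteq> {..<n}" "card T = ?k (card A)" "F \<in> cut_event n A T"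
      using disconnected_imp_cut_event by blast
    moreover from this have "card A \<in> {2..m div 2}" by auto
    ultimately show "F \<in> (\<Union>a\<in>{2..m div 2}. \<Union>A\<in>As a. \<Union>T\<in>Ts a. ?\<Omega> \<inter> cut_event n A T)"
      using F unfolding As_def Ts_def by blast
  qed
  then have "card (?\<Omega> \<inter> {F. \<not> rig_connected n F}) \<le>
      card (\<Union>a\<in>{2..m div 2}. \<Union>A\<in>As a. \<Union>T\<in>Ts a. ?\<Omega> \<inter> cut_event n A T)"
    by (intro card_mono finite_UN_I fin finite_atLeastAtMost) (simp add: finite_colour_assignments)
  also have "\<dots> \<le> (\<Sum>a=2..m div 2. card (\<Union>A\<in>As a. \<Union>T\<in>Ts a. ?\<Omega> \<inter> cut_event n A T))"
    by (rule card_UN_le) simp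
  also have "\<dots> \<le> (\<Sum>a=2..m div 2. \<Sum>A\<in>As a. card (\<Union>T\<in>Ts a. ?\<Omega> \<inter> cut_event n A T))"
    by (intro sum_mono card_UN_le fin)
  also have "\<dots> \<le> (\<Sum>a=2..m div 2. \<Sum>A\<in>As a. \<Sum>T\<in>Ts a. card (?\<Omega> \<inter> cut_event n A T))"
    by (intro sum_mono card_UN_le fin)
  also have "\<dots> = (\<Sum>a=2..m div 2. \<Sum>A\<in>As a. \<Sum>T\<in>Ts a. ?cut a)"
    by (intro sum.cong refl) (auto simp: As_def Ts_def card_cut_event)
  also have "\<dots> = (\<Sum>a=2..m div 2. (m choose a) * (n choose ?k a) * ?cut a)"
    using n_subsets[of "{..<m}"] n_subsets[of "{..<n}"] by (simp add: As_def Ts_def mult.assoc)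
  finally show ?thesis .
qed

section \<open>Connectivity above the threshold\<close>

definition cut_rate :: "nat \<Rightarrow> nat \<Rightarrow> real \<Rightarrow> real" where
  "cut_rate n m y = exp 2 * sqrt (2 * exp 1 * real n / y) * exp (- 2 * (real n / real m) * (1 - y / real m))"

lemma cut_exponential_factor:
  assumes "0 < a" "2 * a \<le> m" "k \<le> a" "k \<le> n"
  shows "(real ((a choose 2) + ((m - a) choose 2)) / real (m choose 2)) ^ (n - k)
           \<le> exp (real a - 2 * real a * (real n / real m) * (1 - real a / real m))"
proof -
  define x where "x = 2 * real a * (real m - real a) / (real m * (real m - 1))"
  have m: "a \<le> m" "2 \<le> m" using assms by linarith+
  have x: "0 \<le> x" "x \<le> 1" "2 * real a * (real m - real a) / (real m ^ 2) \<le> x"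
  proof -
    show "0 \<le> x" using m unfolding x_def by simp
    have "0 \<le> real ((a choose 2) + ((m - a) choose 2)) / real (m choose 2)" by simp
    then show "x \<le> 1" unfolding x_def choose_two_split_ratio[OF m] using m by linarith
    show "2 * real a * (real m - real a) / (real m ^ 2) \<le> x"
      unfolding x_def using m by (intro divide_left_mono) (auto simp: power2_eq_square)
  qed
  have "(1 - x) ^ (n - k) \<le> exp (- x) ^ (n - k)"
    using x by (intro power_mono) (auto simp: exp_ge_add_one_self[of "-x", simplified] add.commute)
  also have "\<dots> = exp (- x * real (n - k))" by (simp add: exp_of_nat_mult[symmetric] mult.commute)
  also have "\<dots> \<le> exp (real a - 2 * real a * (real n / real m) * (1 - real a / real m))"
  proof -
    have "x * real k \<le> real a"
      using x assms(3) by (metis mult_left_le_one_le of_nat_0_le_iff of_nat_le_iff order_trans mult.commute)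
    moreover have "2 * real a * (real n / real m) * (1 - real a / real m)
        = 2 * real a * (real m - real a) / (real m ^ 2) * real n"
      using m by (simp add: field_simps power2_eq_square)
    moreover have "\<dots> \<le> x * real n" using x by (intro mult_right_mono) auto
    ultimately show ?thesis using assms(4) by (simp add: of_nat_diff algebra_simps)
  qed
  finally show ?thesis unfolding x_def choose_two_split_ratio[OF m] using m by simp
qed

lemma cut_binomial_factor:
  assumes "2 \<le> a" "a \<le> m" "k = (a + 1) div 2"
  shows "real (m choose a) * real (n choose k) * (real (a choose 2) / real (m choose 2)) ^ k
           \<le> exp (real a) * (real a / real m) ^ (2 * k - a) * (2 * exp 1 * real n / real a) ^ k"
proof -
  define t where "t = real a / real m"
  have ka: "a \<le> 2 * k" "0 < k" using assms by auto
  have "real (m choose a) * (t ^ 2) ^ k \<le> (real m ^ a / fact a) * (t ^ a * t ^ (2 * k - a))"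
    using ka binomial_le_pow_div_fact[of m a]
    by (intro mult_mono) (auto simp: t_def power_mult[symmetric] power_add[symmetric])
  also have "\<dots> = (real a ^ a / fact a) * t ^ (2 * k - a)"
    using assms by (simp add: t_def power_divide)
  also have "\<dots> \<le> exp (real a) * t ^ (2 * k - a)"
    by (intro mult_right_mono pow_div_fact_le_exp) (auto simp: t_def)
  finally have m_part: "real (m choose a) * (t ^ 2) ^ k \<le> exp (real a) * t ^ (2 * k - a)" .
  have "real (n choose k) \<le> (exp 1 * real n / real k) ^ k"
    by (rule binomial_le_en_over_k_pow_k[OF ka(2)])
  also have "\<dots> \<le> (2 * exp 1 * real n / real a) ^ k"
  proof (intro power_mono)
    have "real a * (exp 1 * real n) \<le> 2 * real k * (exp 1 * real n)"
      using ka by (intro mult_right_mono) auto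
    then show "exp 1 * real n / real k \<le> 2 * exp 1 * real n / real a"
      using ka assms(1) by (simp add: field_simps)
  qed simp
  finally have n_part: "real (n choose k) \<le> (2 * exp 1 * real n / real a) ^ k" .
  have \<alpha>: "(real (a choose 2) / real (m choose 2)) ^ k \<le> (t ^ 2) ^ k"
    unfolding t_def using choose_two_ratio_le[OF assms(1,2)] by (intro power_mono) auto
  have "real (m choose a) * real (n choose k) * (real (a choose 2) / real (m choose 2)) ^ k
      = real (m choose a) * (real (a choose 2) / real (m choose 2)) ^ k * real (n choose k)"
    by (simp only: mult_ac)
  also have "\<dots> \<le> real (m choose a) * (t ^ 2) ^ k * (2 * exp 1 * real n / real a) ^ k"
    using \<alpha> n_part by (intro mult_mono mult_left_mono) auto
  also have "\<dots> \<le> exp (real a) * t ^ (2 * k - a) * (2 * exp 1 * real n / real a) ^ k"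
    using m_part by (intro mult_right_mono) auto
  finally show ?thesis unfolding t_def .
qed

lemma cut_rate_odd_factor_le:
  assumes "0 < a" "2 * a \<le> m"
  shows "real a / real m * sqrt (2 * exp 1 * real n / real a) * cut_rate n m (real a) \<le> 2 * exp 3"
proof -
  define r where "r = real n / real m"
  define t where "t = real a / real m"
  define E where "E = exp (- 2 * r * (1 - t))"
  have r: "0 \<le> r" unfolding r_def by simp
  have "real a / real m * sqrt (2 * exp 1 * real n / real a) * cut_rate n m (real a)
      = t * (2 * exp 1 * real n / real a) * exp 2 * E"
    unfolding cut_rate_def E_def r_def t_def by (simp add: mult_ac power2_eq_square[symmetric])
  also have "\<dots> = 2 * exp 3 * (r * E)"
    using assms unfolding r_def t_def by (simp add: field_simps exp_add[symmetric])
  also have "\<dots> \<le> 2 * exp 3 * 1"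
  proof -
    \<comment> \<open>Since a \<le> m/2, r E \<le> r e^(-r) \<le> 1.\<close>
    have "t \<le> 1 / 2" using assms unfolding t_def by (simp add: field_simps)
    then have "r * 1 \<le> r * (2 * (1 - t))" using r by (intro mult_left_mono) auto
    then have "E \<le> exp (- r)" unfolding E_def by (simp add: algebra_simps)
    then have "r * E \<le> r * exp (- r)" using r by (intro mult_left_mono) auto
    also have "\<dots> \<le> 1"
    proof -
      have "r \<le> exp r" using exp_ge_add_one_self[of r] by linarith
      then show ?thesis by (simp add: exp_minus field_simps)
    qed
    finally show ?thesis by simp
  qed
  finally show ?thesis by simp
qed

lemma cut_summand_le:
  assumes a: "2 \<le> a" "2 * a \<le> m" and k: "k = (a + 1) div 2"
    and Q: "cut_rate n m (real a) \<le> Q" "Q \<le> 1"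
  shows "real (m choose a) * real (n choose k) * (real (a choose 2) / real (m choose 2)) ^ k *
         (real ((a choose 2) + ((m - a) choose 2)) / real (m choose 2)) ^ (n - k) \<le> 2 * exp 3 * Q ^ (a - 1)"
proof (cases "k \<le> n")
  case False
  have "0 \<le> cut_rate n m (real a)" unfolding cut_rate_def by simp
  then show ?thesis using False Q by (simp add: binomial_eq_0)
next
  case True
  define r where "r = real n / real m"
  define t where "t = real a / real m"
  define s where "s = sqrt (2 * exp 1 * real n / real a)"
  define E where "E = exp (- 2 * r * (1 - t))"
  define q where "q = cut_rate n m (real a)"
  have q_eq: "q = exp 2 * s * E" unfolding q_def cut_rate_def s_def E_def r_def t_def by simp
  have ka: "k \<le> a" "a \<le> 2 * k" "2 * k \<le> a + 1" using k a by auto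
  have nonneg: "0 \<le> r" "0 \<le> t" "0 \<le> s" "0 \<le> q" unfolding r_def t_def s_def q_eq E_def by auto
  have "real (m choose a) * real (n choose k) * (real (a choose 2) / real (m choose 2)) ^ k *
         (real ((a choose 2) + ((m - a) choose 2)) / real (m choose 2)) ^ (n - k)
      \<le> (exp (real a) * t ^ (2 * k - a) * (s ^ 2) ^ k) * exp (real a - 2 * real a * r * (1 - t))"
  proof (rule mult_mono)
    show "real (m choose a) * real (n choose k) * (real (a choose 2) / real (m choose 2)) ^ k
        \<le> exp (real a) * t ^ (2 * k - a) * (s ^ 2) ^ k"
      using cut_binomial_factor[of a m k n] a k unfolding t_def s_def by simp
    show "(real ((a choose 2) + ((m - a) choose 2)) / real (m choose 2)) ^ (n - k)
        \<le> exp (real a - 2 * real a * r * (1 - t))"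
      using cut_exponential_factor[of a m k n] a ka True unfolding r_def t_def by simp
    show "0 \<le> exp (real a) * t ^ (2 * k - a) * (s ^ 2) ^ k" using nonneg by simp
  qed simp
  also have "\<dots> = (t * s) ^ (2 * k - a) * q ^ a"
  proof -
    have "(s ^ 2) ^ k = s ^ (2 * k - a) * s ^ a"
      using ka by (simp add: power_mult[symmetric] power_add[symmetric])
    moreover have "exp (real a) * exp (real a - 2 * real a * r * (1 - t)) = exp 2 ^ a * E ^ a"
      unfolding E_def by (simp add: exp_of_nat_mult[symmetric] exp_add[symmetric] algebra_simps)
    ultimately have "(exp (real a) * t ^ (2 * k - a) * (s ^ 2) ^ k) * exp (real a - 2 * real a * r * (1 - t))
        = (t ^ (2 * k - a) * s ^ (2 * k - a)) * (exp 2 ^ a * s ^ a * E ^ a)"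
      by (simp add: mult_ac)
    then show ?thesis unfolding q_eq power_mult_distrib .
  qed
  also have "\<dots> \<le> 2 * exp 3 * Q ^ (a - 1)"
  proof (cases "2 * k = a")
    case True
    have "q ^ a \<le> Q ^ (a - 1)"
      using nonneg Q power_decreasing[of "a - 1" a Q] power_mono[of q Q a] unfolding q_def by force
    moreover have "1 \<le> 2 * exp (3::real)" using one_le_exp_iff[of "3::real"] by linarith
    then have "1 * Q ^ (a - 1) \<le> 2 * exp 3 * Q ^ (a - 1)"
      using nonneg Q unfolding q_def by (intro mult_right_mono) auto
    ultimately show ?thesis using True by simp
  next
    case False
    then have odd: "2 * k - a = 1" using ka by linarith
    have "t * s * q \<le> 2 * exp 3"
      using cut_rate_odd_factor_le[of a m n] a unfolding t_def s_def q_def by simp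
    moreover have "(t * s) ^ (2 * k - a) * q ^ a = (t * s * q) * q ^ (a - 1)"
      using odd a by (simp add: power_eq_if)
    moreover have "q ^ (a - 1) \<le> Q ^ (a - 1)" using nonneg Q unfolding q_def by (intro power_mono) auto
    ultimately show ?thesis using nonneg by (simp add: mult_mono)
  qed
  finally show ?thesis .
qed

lemma cut_rate_eq_exp:
  assumes "0 < n" "0 < y"
  shows "cut_rate n m y = exp ((2 + ln (2 * exp 1 * real n) / 2 - 2 * (real n / real m))
                               - ln y / 2 + (2 * (real n / real m) / real m) * y)"
proof -
  have "sqrt (2 * exp 1 * real n / y) = exp (ln (2 * exp 1 * real n / y) / 2)"
    using assms by (simp add: powr_half_sqrt[symmetric] powr_def)
  also have "ln (2 * exp 1 * real n / y) = ln (2 * exp 1 * real n) - ln y"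
    using assms by (simp add: ln_div)
  finally show ?thesis
    unfolding cut_rate_def by (simp add: exp_add[symmetric] algebra_simps diff_divide_distrib)
qed

text \<open>The logarithm of the cut rate is convex in y, so on an interval the rate peaks at an endpoint.\<close>

lemma cut_rate_le_max:
  assumes "0 < n" "0 < y0" "y0 \<le> y" "y \<le> y1"
  shows "cut_rate n m y \<le> max (cut_rate n m y0) (cut_rate n m y1)"
proof -
  define c where "c = 2 + ln (2 * exp 1 * real n) / 2 - 2 * (real n / real m)"
  define B where "B = 2 * (real n / real m) / real m"
  let ?g = "\<lambda>y. c - ln y / 2 + B * y"
  have "concave_on {y0..y1} ln"
    using ln_concave assms unfolding concave_on_def by (auto intro: convex_on_subset)
  then have "concave_on {y0..y1} (\<lambda>y. ln y / 2)" by (intro concave_on_cdiv) auto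
  moreover have "convex_on {y0..y1} (\<lambda>y. B * y)"
    unfolding B_def by (intro convex_on_cmul) (auto simp: convex_on_ident)
  ultimately have "convex_on {y0..y1} ?g"
    by (intro convex_on_add convex_on_diff) (auto simp: convex_on_const)
  then have "?g y \<le> max (?g y0) (?g y1)" using assms by (intro convex_on_le_max) auto
  then have "exp (?g y) \<le> max (exp (?g y0)) (exp (?g y1))" by (auto simp: max_def split: if_splits)
  then show ?thesis using assms by (simp add: cut_rate_eq_exp c_def B_def)
qed

lemma prob_disconnected_le_sum:
  assumes "2 \<le> m"
  shows "measure_pmf.prob (RIG n m 2) {F. \<not> rig_connected n F} \<le>
    (\<Sum>a=2..m div 2. real (m choose a) * real (n choose ((a + 1) div 2)) *
       (real (a choose 2) / real (m choose 2)) ^ ((a + 1) div 2) *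
       (real ((a choose 2) + ((m - a) choose 2)) / real (m choose 2)) ^ (n - (a + 1) div 2))"
proof -
  let ?N = "real (m choose 2)"
  let ?k = "\<lambda>a. (a + 1) div 2"
  have N: "0 < ?N" using assms by (simp add: zero_less_binomial_iff)
  have "measure_pmf.prob (RIG n m 2) {F. \<not> rig_connected n F}
      = card (colour_assignments n m 2 \<inter> {F. \<not> rig_connected n F}) / ?N ^ n"
    using assms by (simp add: prob_RIG card_colour_assignments)
  also have "\<dots> \<le> (\<Sum>a=2..m div 2. real (m choose a) * real (n choose ?k a) *
       (real (a choose 2) ^ ?k a * real ((a choose 2) + ((m - a) choose 2)) ^ (n - ?k a))) / ?N ^ n"
  proof (rule divide_right_mono)
    show "real (card (colour_assignments n m 2 \<inter> {F. \<not> rig_connected n F})) \<le>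
        (\<Sum>a=2..m div 2. real (m choose a) * real (n choose ?k a) *
         (real (a choose 2) ^ ?k a * real ((a choose 2) + ((m - a) choose 2)) ^ (n - ?k a)))"
      using of_nat_mono[OF card_disconnected_le[of n m], where 'a = real] by simp
  qed simp
  also have "\<dots> = (\<Sum>a=2..m div 2. real (m choose a) * real (n choose ?k a) *
       (real (a choose 2) / ?N) ^ ?k a * (real ((a choose 2) + ((m - a) choose 2)) / ?N) ^ (n - ?k a))"
    unfolding sum_divide_distrib
  proof (intro sum.cong refl)
    fix a
    show "real (m choose a) * real (n choose ?k a) *
        (real (a choose 2) ^ ?k a * real ((a choose 2) + ((m - a) choose 2)) ^ (n - ?k a)) / ?N ^ n =
      real (m choose a) * real (n choose ?k a) *
        (real (a choose 2) / ?N) ^ ?k a * (real ((a choose 2) + ((m - a) choose 2)) / ?N) ^ (n - ?k a)"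
    proof (cases "?k a \<le> n")
      case True
      then have "?N ^ n = ?N ^ ?k a * ?N ^ (n - ?k a)" by (simp add: power_add[symmetric])
      then show ?thesis using N by (simp add: power_divide)
    qed (simp add: binomial_eq_0)
  qed
  finally show ?thesis .
qed

lemma prob_disconnected_le:
  assumes "2 \<le> m" "0 < n"
    and Q: "cut_rate n m 2 \<le> Q" "cut_rate n m (real m / 2) \<le> Q" "Q \<le> 1 / 2"
  shows "measure_pmf.prob (RIG n m 2) {F. \<not> rig_connected n F} \<le> 4 * exp 3 * Q"
proof -
  have "0 \<le> cut_rate n m 2" unfolding cut_rate_def by simp
  then have Q0: "0 \<le> Q" using Q(1) by linarith
  have "measure_pmf.prob (RIG n m 2) {F. \<not> rig_connected n F} \<le> (\<Sum>a=2..m div 2. 2 * exp 3 * Q ^ (a - 1))"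
  proof (rule order.trans[OF prob_disconnected_le_sum[OF assms(1)] sum_mono])
    fix a assume a: "a \<in> {2..m div 2}"
    then have "cut_rate n m (real a) \<le> max (cut_rate n m 2) (cut_rate n m (real m / 2))"
      using assms(2) by (intro cut_rate_le_max) auto
    then show "real (m choose a) * real (n choose ((a + 1) div 2)) *
       (real (a choose 2) / real (m choose 2)) ^ ((a + 1) div 2) *
       (real ((a choose 2) + ((m - a) choose 2)) / real (m choose 2)) ^ (n - (a + 1) div 2)
       \<le> 2 * exp 3 * Q ^ (a - 1)"
      using a Q by (intro cut_summand_le) auto
  qed
  also have "\<dots> = 2 * exp 3 * (\<Sum>a=2..m div 2. Q ^ (a - 1))" by (simp add: sum_distrib_left)
  also have "\<dots> \<le> 2 * exp 3 * (2 * Q)" using sum_power_pred_le[OF Q0 Q(3)] by simp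
  finally show ?thesis by simp
qed

lemma cut_rate_two_le:
  assumes m: "4 \<le> m" and n: "2 \<le> n" and D: "ln (real n) \<le> 4 * real n / real m"
    and big: "4 * (ln (real n))\<^sup>2 \<le> real n"
  shows "cut_rate n m 2 \<le> exp (7 / 2 - (4 * real n / real m - ln (real n)) / 6)"
proof -
  define r where "r = real n / real m"
  define D where "D = 4 * r - ln (real n)"
  have "cut_rate n m 2 = exp (2 + (ln 2 + 1 + ln (real n)) / 2 - 2 * r - ln 2 / 2 + 4 * r / real m)"
    using n cut_rate_eq_exp[of n 2 m] by (simp add: ln_mult r_def)
  also have "\<dots> = exp (5 / 2 + 4 * r / real m - D / 2)" by (simp add: D_def field_simps)
  also have "\<dots> \<le> exp (7 / 2 - D / 6)"
  proof -
    \<comment> \<open>Either r \<ge> ln n, and then 4r/m \<le> r \<le> D/3; or r < ln n, so m > n / ln n \<ge> 2 sqrt n and 4r/m = 4n/m^2 < 1.\<close>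
    have "4 * r / real m \<le> 1 + D / 3"
    proof (cases "ln (real n) \<le> r")
      case True
      have "r * 4 \<le> r * real m" using m by (intro mult_left_mono) (auto simp: r_def)
      then have "4 * r / real m \<le> r" using m by (simp add: field_simps)
      moreover have "r \<le> D / 3" using True unfolding D_def by simp
      ultimately show ?thesis by linarith
    next
      case False
      have "real n < ln (real n) * real m" using False m by (simp add: r_def field_simps)
      then have "real n * real n < (ln (real n) * real m) * (ln (real n) * real m)"
        using n by (intro mult_strict_mono) auto
      then have "4 * real n * real n < 4 * (ln (real n))\<^sup>2 * (real m * real m)"
        by (simp add: power2_eq_square algebra_simps)
      also have "\<dots> \<le> real n * (real m * real m)" using big by (intro mult_right_mono) auto
      finally have "4 * real n < real m * real m" using n by simp
      then have "4 * r / real m < 1" using m by (simp add: r_def field_simps)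
      moreover have "0 \<le> D" using D by (simp add: D_def r_def)
      ultimately show ?thesis by linarith
    qed
    then show ?thesis by simp
  qed
  finally show ?thesis by (simp add: D_def r_def)
qed

lemma cut_rate_half_eq:
  assumes "0 < m"
  shows "cut_rate n m (real m / 2) = exp 2 * sqrt (4 * exp 1 * (real n / real m)) * exp (- (real n / real m))"
  unfolding cut_rate_def using assms by (simp add: field_simps)

lemma prob_disconnected_le_max:
  fixes n m :: nat
  defines "Q \<equiv> max (exp (7 / 2 - (4 * real n / real m - ln (real n)) / 6)) (cut_rate n m (real m / 2))"
  assumes "2 \<le> m" "2 \<le> n" "ln (real n) \<le> 4 * real n / real m" "4 * (ln (real n))\<^sup>2 \<le> real n"
    and "Q \<le> 1 / 2"
  shows "measure_pmf.prob (RIG n m 2) {F. \<not> rig_connected n F} \<le> 4 * exp 3 * Q"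
proof (cases "m < 4")
  case True
  then have "measure_pmf.prob (RIG n m 2) {F. \<not> rig_connected n F} \<le> 0"
    using prob_disconnected_le_sum[of m n] assms by simp
  moreover have "0 \<le> 4 * exp 3 * Q" unfolding Q_def by (simp add: le_max_iff_disj)
  ultimately show ?thesis by linarith
next
  case False
  then show ?thesis
    using assms cut_rate_two_le[of m n] by (intro prob_disconnected_le) auto
qed

lemma prob_RIG_connected_tendsto_one:
  fixes m :: "nat \<Rightarrow> nat"
  assumes m: "\<forall>n. 2 \<le> m n"
    and D: "filterlim (\<lambda>n. 4 * real n / real (m n) - ln (real n)) at_top sequentially"
  shows "(\<lambda>n. measure_pmf.prob (RIG n (m n) 2) {F. rig_connected n F}) \<longlonglongrightarrow> 1"
proof -
  define r where "r n = real n / real (m n)" for n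
  define g where "g x = exp 2 * sqrt (4 * exp 1 * x) * exp (- x)" for x :: real
  define Q where "Q n = max (exp (7 / 2 - (4 * real n / real (m n) - ln (real n)) / 6))
                           (cut_rate n (m n) (real (m n) / 2))" for n
  have "\<forall>\<^sub>F n in sequentially. 0 \<le> 4 * real n / real (m n) - ln (real n)"
    using D unfolding filterlim_at_top by blast
  then have D_nonneg: "\<forall>\<^sub>F n in sequentially. ln (real n) \<le> 4 * real n / real (m n)"
    by eventually_elim simp
  have r: "filterlim r at_top sequentially"
  proof (rule filterlim_at_top_mono)
    show "filterlim (\<lambda>n::nat. ln (real n) / 4) at_top sequentially" by real_asymp
    show "\<forall>\<^sub>F n in sequentially. ln (real n) / 4 \<le> r n"
      using D_nonneg by eventually_elim (simp add: r_def mult.commute)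
  qed
  have half: "cut_rate n (m n) (real (m n) / 2) = g (r n)" for n
    using m cut_rate_half_eq[of "m n" n] unfolding g_def r_def by (metis not_numeral_le_zero not_gr0)
  have "((\<lambda>x::real. exp (7 / 2 - x / 6)) \<longlongrightarrow> 0) at_top" "(g \<longlongrightarrow> 0) at_top"
    unfolding g_def by real_asymp+
  from tendsto_max[OF filterlim_compose[OF this(1) D] filterlim_compose[OF this(2) r]]
  have Q: "Q \<longlonglongrightarrow> 0" unfolding Q_def half o_def by simp
  have "\<forall>\<^sub>F n in sequentially. Q n < 1 / 2" using order_tendstoD(2)[OF Q, of "1 / 2"] by simp
  moreover have "\<forall>\<^sub>F n in sequentially. 4 * (ln (real n))\<^sup>2 \<le> real n" by real_asymp
  ultimately have "\<forall>\<^sub>F n in sequentially.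
      measure_pmf.prob (RIG n (m n) 2) {F. \<not> rig_connected n F} \<le> 4 * exp 3 * Q n"
    using D_nonneg eventually_ge_at_top[of 2]
    by eventually_elim (use m in \<open>auto simp: Q_def intro!: prob_disconnected_le_max\<close>)
  then have "(\<lambda>n. measure_pmf.prob (RIG n (m n) 2) {F. \<not> rig_connected n F}) \<longlonglongrightarrow> 0"
  proof (rule tendsto_sandwich[of "\<lambda>_. 0", rotated])
    show "(\<lambda>n. 4 * exp 3 * Q n) \<longlonglongrightarrow> 0" using tendsto_mult_right_zero[OF Q] .
  qed simp_all
  then have "(\<lambda>n. 1 - measure_pmf.prob (RIG n (m n) 2) {F. \<not> rig_connected n F}) \<longlonglongrightarrow> 1 - 0"
    by (intro tendsto_diff tendsto_const)
  then show ?thesis by (subst prob_Collect_eq_1_minus) simp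
qed

section \<open>Isolated vertices\<close>

definition isolated :: "nat \<Rightarrow> (nat \<Rightarrow> nat set) \<Rightarrow> nat \<Rightarrow> bool" where
  "isolated n F v \<longleftrightarrow> (\<forall>w<n. w \<noteq> v \<longrightarrow> F w \<inter> F v = {})"

lemma isolated_imp_disconnected:
  assumes "2 \<le> n" "v < n" "isolated n F v"
  shows "\<not> rig_connected n F"
proof
  assume "rig_connected n F"
  define w where "w = (if v = 0 then 1 else 0 :: nat)"
  have w: "w < n" "w \<noteq> v" unfolding w_def using assms by auto
  then have "(v, w) \<in> (rig_edges n F)\<^sup>*"
    using \<open>rig_connected n F\<close> assms unfolding rig_connected_def graph_connected_def by auto
  then show False
  proof (cases rule: converse_rtranclE)
    case (step y)
    then show False using assms(3) unfolding rig_edges_def isolated_def by blast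
  qed (use w in simp)
qed

definition pinned_event :: "nat \<Rightarrow> nat set \<Rightarrow> (nat \<Rightarrow> nat set) \<Rightarrow> (nat \<Rightarrow> nat set) set" where
  "pinned_event n U G = {F. \<forall>w<n. F w \<in> (if w \<in> U then {G w} else {S. S \<inter> \<Union>(G ` U) = {}})}"

definition isolated_patterns :: "nat \<Rightarrow> nat set \<Rightarrow> (nat \<Rightarrow> nat set) set" where
  "isolated_patterns m U = {G \<in> PiE U (\<lambda>_. colour_sets m 2). disjoint_family_on G U}"

lemma card_pinned_event:
  assumes U: "U \<subseteq> {..<n}" and G: "G \<in> isolated_patterns m U"
  shows "card (colour_assignments n m 2 \<inter> pinned_event n U G) = ((m - 2 * card U) choose 2) ^ (n - card U)"
proof -
  let ?C = "\<Union>(G ` U)"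
  let ?X = "\<lambda>w. if w \<in> U then {G w} else {S. S \<inter> ?C = {}}"
  let ?c = "\<lambda>w. card (colour_sets m 2 \<inter> ?X w)"
  have "finite U" using U finite_subset by blast
  have G_pairs: "G w \<in> colour_sets m 2" if "w \<in> U" for w
    using G that unfolding isolated_patterns_def by auto
  have C: "?C \<subseteq> {..<m}" using G_pairs unfolding colour_sets_def by blast
  have "card ?C = (\<Sum>w\<in>U. card (G w))"
    using G G_pairs \<open>finite U\<close> unfolding isolated_patterns_def disjoint_family_on_def
    by (intro card_UN_disjoint) (auto simp: colour_sets_def intro: finite_subset)
  also have "\<dots> = 2 * card U" using G_pairs by (simp add: colour_sets_def)
  finally have card_C: "card ?C = 2 * card U" .
  have "card (colour_assignments n m 2 \<inter> pinned_event n U G) = (\<Prod>w<n. ?c w)"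
    unfolding pinned_event_def by (rule card_colour_assignments_restrict)
  also have "\<dots> = (\<Prod>w\<in>{..<n} - U. ?c w) * (\<Prod>w\<in>U. ?c w)"
    by (rule prod.subset_diff[OF U finite_lessThan])
  also have "(\<Prod>w\<in>{..<n} - U. ?c w) = (\<Prod>w\<in>{..<n} - U. (m - 2 * card U) choose 2)"
    using card_colour_sets_avoiding[OF C] card_C by (intro prod.cong) auto
  also have "(\<Prod>w\<in>U. ?c w) = 1"
    using G_pairs by (intro prod.neutral) auto
  finally show ?thesis using U by (simp add: card_Diff_subset \<open>finite U\<close>)
qed

lemma all_isolated_eq_UN_pinned_event:
  assumes "U \<subseteq> {..<n}"
  shows "colour_assignments n m 2 \<inter> {F. \<forall>u\<in>U. isolated n F u} =
    (\<Union>G\<in>isolated_patterns m U. colour_assignments n m 2 \<inter> pinned_event n U G)"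
proof (intro equalityI subsetI)
  fix F assume F: "F \<in> colour_assignments n m 2 \<inter> {F. \<forall>u\<in>U. isolated n F u}"
  have "disjoint_family_on F U"
    using F assms unfolding disjoint_family_on_def isolated_def by (fastforce simp: subset_iff)
  moreover have "restrict F U \<in> PiE U (\<lambda>_. colour_sets m 2)"
    using F assms colour_assignmentsD[of F n m 2] by (auto simp: colour_sets_def)
  ultimately have "restrict F U \<in> isolated_patterns m U"
    unfolding isolated_patterns_def disjoint_family_on_def by simp
  moreover have "F w \<inter> F u = {}" if "w < n" "w \<notin> U" "u \<in> U" for w u
  proof -
    have "w \<noteq> u" using that by auto
    then show ?thesis using F that unfolding isolated_def by blast
  qed
  then have "F \<in> pinned_event n U (restrict F U)"
    unfolding pinned_event_def by auto
  ultimately show "F \<in> (\<Union>G\<in>isolated_patterns m U. colour_assignments n m 2 \<inter> pinned_event n U G)"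
    using F by blast
next
  fix F assume "F \<in> (\<Union>G\<in>isolated_patterns m U. colour_assignments n m 2 \<inter> pinned_event n U G)"
  then obtain G where G: "G \<in> isolated_patterns m U" "F \<in> colour_assignments n m 2" "F \<in> pinned_event n U G"
    by blast
  have FG: "F u = G u" if "u \<in> U" for u using G(3) assms that unfolding pinned_event_def by auto
  have "isolated n F u" if "u \<in> U" for u
    unfolding isolated_def
  proof (intro allI impI)
    fix w assume w: "w < n" "w \<noteq> u"
    show "F w \<inter> F u = {}"
    proof (cases "w \<in> U")
      case True
      then show ?thesis using G(1) FG that w unfolding isolated_patterns_def disjoint_family_on_def by auto
    next
      case False
      have "F w \<in> (if w \<in> U then {G w} else {S. S \<inter> \<Union>(G ` U) = {}})"
        using G(3) w(1) unfolding pinned_event_def by blast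
      with False have "F w \<inter> \<Union>(G ` U) = {}" by simp
      then show ?thesis using FG that by auto
    qed
  qed
  then show "F \<in> colour_assignments n m 2 \<inter> {F. \<forall>u\<in>U. isolated n F u}" using G by blast
qed

lemma card_all_isolated:
  assumes U: "U \<subseteq> {..<n}"
  shows "card (colour_assignments n m 2 \<inter> {F. \<forall>u\<in>U. isolated n F u}) =
    card (isolated_patterns m U) * ((m - 2 * card U) choose 2) ^ (n - card U)"
proof -
  have "finite U" using U finite_subset by blast
  have "isolated_patterns m U \<subseteq> PiE U (\<lambda>_. colour_sets m 2)" unfolding isolated_patterns_def by blast
  then have fin: "finite (isolated_patterns m U)"
    by (rule finite_subset) (intro finite_PiE \<open>finite U\<close> finite_colour_sets)
  have "card (\<Union>G\<in>isolated_patterns m U. colour_assignments n m 2 \<inter> pinned_event n U G) =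
      (\<Sum>G\<in>isolated_patterns m U. card (colour_assignments n m 2 \<inter> pinned_event n U G))"
  proof (rule card_UN_disjoint[OF fin])
    show "\<forall>G\<in>isolated_patterns m U. finite (colour_assignments n m 2 \<inter> pinned_event n U G)"
      by (simp add: finite_colour_assignments)
    show "\<forall>G\<in>isolated_patterns m U. \<forall>G'\<in>isolated_patterns m U. G \<noteq> G' \<longrightarrow>
        (colour_assignments n m 2 \<inter> pinned_event n U G) \<inter> (colour_assignments n m 2 \<inter> pinned_event n U G') = {}"
    proof (intro ballI impI)
      fix G G' assume GG': "G \<in> isolated_patterns m U" "G' \<in> isolated_patterns m U" "G \<noteq> G'"
      have G: "G \<in> PiE U (\<lambda>_. colour_sets m 2)" "G' \<in> PiE U (\<lambda>_. colour_sets m 2)"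
        using GG' unfolding isolated_patterns_def by auto
      have "\<exists>u\<in>U. G u \<noteq> G' u"
      proof (rule ccontr)
        assume "\<not> (\<exists>u\<in>U. G u \<noteq> G' u)"
        then have "G = G'" using PiE_ext[OF G] by blast
        then show False using GG'(3) by simp
      qed
      then obtain u where u: "u \<in> U" "G u \<noteq> G' u" by blast
      have "F u = G u" "F u = G' u" if "F \<in> pinned_event n U G" "F \<in> pinned_event n U G'" for F
        using that u U unfolding pinned_event_def by auto
      then show "(colour_assignments n m 2 \<inter> pinned_event n U G) \<inter> (colour_assignments n m 2 \<inter> pinned_event n U G') = {}"
        using u by blast
    qed
  qed
  also have "\<dots> = (\<Sum>G\<in>isolated_patterns m U. ((m - 2 * card U) choose 2) ^ (n - card U))"
    using card_pinned_event[OF U] by (intro sum.cong) auto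
  finally show ?thesis by (simp add: all_isolated_eq_UN_pinned_event[OF U])
qed

lemma card_isolated_patterns_singleton: "card (isolated_patterns m {v}) = m choose 2"
proof -
  have "isolated_patterns m {v} = PiE {v} (\<lambda>_. colour_sets m 2)"
    unfolding isolated_patterns_def disjoint_family_on_def by auto
  then show ?thesis by (simp add: card_PiE card_colour_sets)
qed

lemma card_isolated_patterns_pair:
  assumes "u \<noteq> v"
  shows "card (isolated_patterns m {u, v}) = (m choose 2) * ((m - 2) choose 2)"
proof -
  let ?P = "Sigma (colour_sets m 2) (\<lambda>T. colour_sets m 2 \<inter> {S. S \<inter> T = {}})"
  let ?g = "\<lambda>(T1, T2) w. if w = u then T1 else if w = v then T2 else undefined"
  have "bij_betw (\<lambda>G. (G u, G v)) (isolated_patterns m {u, v}) ?P"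
  proof (rule bij_betw_byWitness[where f' = ?g])
    show "\<forall>G\<in>isolated_patterns m {u, v}. ?g (G u, G v) = G"
      unfolding isolated_patterns_def by (auto simp: PiE_def extensional_def fun_eq_iff)
    show "\<forall>p\<in>?P. (\<lambda>G. (G u, G v)) (?g p) = p" using assms by auto
    show "(\<lambda>G. (G u, G v)) ` isolated_patterns m {u, v} \<subseteq> ?P"
      using assms unfolding isolated_patterns_def disjoint_family_on_def by (auto simp: PiE_def)
    show "?g ` ?P \<subseteq> isolated_patterns m {u, v}"
      using assms unfolding isolated_patterns_def disjoint_family_on_def by (auto simp: PiE_def extensional_def)
  qed
  then have "card (isolated_patterns m {u, v}) = card ?P" by (rule bij_betw_same_card)
  also have "\<dots> = (\<Sum>T\<in>colour_sets m 2. card (colour_sets m 2 \<inter> {S. S \<inter> T = {}}))"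
    by (simp add: finite_colour_sets)
  also have "\<dots> = (\<Sum>T\<in>colour_sets m 2. (m - 2) choose 2)"
    using card_colour_sets_avoiding by (intro sum.cong) (auto simp: colour_sets_def)
  finally show ?thesis by (simp add: card_colour_sets)
qed

lemma card_isolated:
  assumes "v < n"
  shows "card (colour_assignments n m 2 \<inter> {F. isolated n F v}) = (m choose 2) * ((m - 2) choose 2) ^ (n - 1)"
  using card_all_isolated[of "{v}" n m] assms by (simp add: card_isolated_patterns_singleton)

lemma card_isolated_pair:
  assumes "u < n" "v < n" "u \<noteq> v"
  shows "card (colour_assignments n m 2 \<inter> {F. isolated n F u \<and> isolated n F v}) =
    (m choose 2) * ((m - 2) choose 2) * ((m - 4) choose 2) ^ (n - 2)"
proof -
  have "card {u, v} = 2" "{F. \<forall>x\<in>{u, v}. isolated n F x} = {F. isolated n F u \<and> isolated n F v}"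
    using assms by auto
  then show ?thesis
    using card_all_isolated[of "{u, v}" n m] assms card_isolated_patterns_pair[OF assms(3), of m]
    by (simp only:) simp
qed

section \<open>Disconnection below the threshold\<close>

text \<open>Chebyshev's inequality for the uniform measure on \<Omega>, cleared of denominators:
  P(X = 0) \<le> E(X^2) / (E X)^2 - 1.\<close>

lemma card_zeros_mul_sq_sum_le:
  fixes X :: "'a \<Rightarrow> real"
  assumes "finite \<Omega>"
  shows "real (card {F\<in>\<Omega>. X F = 0}) * (\<Sum>F\<in>\<Omega>. X F)\<^sup>2 \<le>
           real (card \<Omega>) * (real (card \<Omega>) * (\<Sum>F\<in>\<Omega>. (X F)\<^sup>2) - (\<Sum>F\<in>\<Omega>. X F)\<^sup>2)"
proof -
  define c where "c = real (card \<Omega>)"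
  define S1 where "S1 = (\<Sum>F\<in>\<Omega>. X F)"
  define S2 where "S2 = (\<Sum>F\<in>\<Omega>. (X F)\<^sup>2)"
  have "real (card {F\<in>\<Omega>. X F = 0}) * S1\<^sup>2 = (\<Sum>F\<in>{F\<in>\<Omega>. X F = 0}. (c * X F - S1)\<^sup>2)"
    by simp
  also have "\<dots> \<le> (\<Sum>F\<in>\<Omega>. (c * X F - S1)\<^sup>2)"
    using assms by (intro sum_mono2) auto
  also have "\<dots> = (\<Sum>F\<in>\<Omega>. c\<^sup>2 * (X F)\<^sup>2 - 2 * c * S1 * X F + S1\<^sup>2)"
    by (intro sum.cong refl) (simp add: power2_eq_square algebra_simps)
  also have "\<dots> = c\<^sup>2 * S2 - 2 * c * S1 * S1 + c * S1\<^sup>2"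
    unfolding S2_def c_def by (simp add: sum.distrib sum_subtractf sum_distrib_left S1_def)
  also have "\<dots> = c * (c * S2 - S1\<^sup>2)" by (simp add: power2_eq_square algebra_simps)
  finally show ?thesis unfolding c_def S1_def S2_def .
qed

lemma sum_indicator_eq_card:
  "finite A \<Longrightarrow> (\<Sum>x\<in>A. if P x then 1 else 0 :: real) = real (card (A \<inter> {x. P x}))"
  by (simp add: sum.If_cases Int_def)

definition isolated_count :: "nat \<Rightarrow> (nat \<Rightarrow> nat set) \<Rightarrow> real" where
  "isolated_count n F = (\<Sum>v<n. if isolated n F v then 1 else 0)"

lemma sum_isolated_count:
  "(\<Sum>F\<in>colour_assignments n m 2. isolated_count n F) =
     real n * (real (m choose 2) * real ((m - 2) choose 2) ^ (n - 1))"
proof -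
  have "(\<Sum>F\<in>colour_assignments n m 2. isolated_count n F) =
      (\<Sum>v<n. \<Sum>F\<in>colour_assignments n m 2. if isolated n F v then 1 else 0)"
    unfolding isolated_count_def by (rule sum.swap)
  also have "\<dots> = (\<Sum>v<n. real (m choose 2) * real ((m - 2) choose 2) ^ (n - 1))"
    by (intro sum.cong refl) (simp add: sum_indicator_eq_card finite_colour_assignments card_isolated)
  finally show ?thesis by simp
qed

lemma sum_isolated_count_sq:
  "(\<Sum>F\<in>colour_assignments n m 2. (isolated_count n F)\<^sup>2) =
     real n * (real (m choose 2) * real ((m - 2) choose 2) ^ (n - 1) +
       real (n - 1) * (real (m choose 2) * real ((m - 2) choose 2) * real ((m - 4) choose 2) ^ (n - 2)))"
proof -
  let ?\<Omega> = "colour_assignments n m 2"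
  let ?I = "\<lambda>u v. \<Sum>F\<in>?\<Omega>. if isolated n F u \<and> isolated n F v then 1 else 0 :: real"
  have "(\<Sum>F\<in>?\<Omega>. (isolated_count n F)\<^sup>2) = (\<Sum>u<n. \<Sum>v<n. ?I u v)"
  proof -
    have "(\<Sum>F\<in>?\<Omega>. (isolated_count n F)\<^sup>2) =
        (\<Sum>F\<in>?\<Omega>. \<Sum>u<n. \<Sum>v<n. if isolated n F u \<and> isolated n F v then 1 else 0 :: real)"
      unfolding isolated_count_def power2_eq_square sum_product by (intro sum.cong refl) auto
    then show ?thesis by (simp add: sum.swap[of _ ?\<Omega>])
  qed
  also have "\<dots> = (\<Sum>u<n. real (m choose 2) * real ((m - 2) choose 2) ^ (n - 1) +
       real (n - 1) * (real (m choose 2) * real ((m - 2) choose 2) * real ((m - 4) choose 2) ^ (n - 2)))"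
  proof (intro sum.cong refl)
    fix u assume u: "u \<in> {..<n}"
    have "(\<Sum>v<n. ?I u v) = ?I u u + (\<Sum>v\<in>{..<n} - {u}. ?I u v)"
      using u by (subst sum.remove[of _ u]) auto
    also have "?I u u = real (m choose 2) * real ((m - 2) choose 2) ^ (n - 1)"
      using u by (simp add: sum_indicator_eq_card finite_colour_assignments card_isolated)
    also have "(\<Sum>v\<in>{..<n} - {u}. ?I u v) =
        (\<Sum>v\<in>{..<n} - {u}. real (m choose 2) * real ((m - 2) choose 2) * real ((m - 4) choose 2) ^ (n - 2))"
      using u by (intro sum.cong refl) (simp add: sum_indicator_eq_card finite_colour_assignments card_isolated_pair)
    finally show "(\<Sum>v<n. ?I u v) = real (m choose 2) * real ((m - 2) choose 2) ^ (n - 1) +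
       real (n - 1) * (real (m choose 2) * real ((m - 2) choose 2) * real ((m - 4) choose 2) ^ (n - 2))"
      using u by simp
  qed
  finally show ?thesis by (simp only: sum_constant card_lessThan)
qed

lemma isolated_moment_ratio_le:
  fixes N b d :: real and j :: nat
  assumes N: "0 < N" and b: "0 < b" and d: "0 \<le> d" and Nd: "N * d \<le> b\<^sup>2"
  shows "N ^ (j + 2) * (real (j + 2) * N * b ^ (j + 1) + real (j + 2) * real (j + 1) * N * b * d ^ j) /
           (real (j + 2) * N * b ^ (j + 1))\<^sup>2 \<le> N ^ (j + 1) / (real (j + 2) * b ^ (j + 1)) + N / b"
proof -
  define J where "J = real (j + 2)"
  have J: "0 < J" unfolding J_def by simp
  have "((N * d) / b\<^sup>2) ^ j \<le> 1" using N b d Nd by (intro power_le_one) auto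
  then have "(N / b) * ((N * d) / b\<^sup>2) ^ j \<le> N / b" using N b by (intro mult_left_le) auto
  moreover have "real (j + 1) / J \<le> 1" "0 \<le> (N / b) * ((N * d) / b\<^sup>2) ^ j"
    using N b d unfolding J_def by auto
  ultimately have "real (j + 1) / J * ((N / b) * ((N * d) / b\<^sup>2) ^ j) \<le> N / b"
    by (meson mult_left_le_one_le of_nat_0_le_iff divide_nonneg_nonneg order_trans J less_imp_le)
  moreover have "N ^ (j + 2) * (J * N * b ^ (j + 1) + J * real (j + 1) * N * b * d ^ j) / (J * N * b ^ (j + 1))\<^sup>2 =
      N ^ (j + 1) / (J * b ^ (j + 1)) + real (j + 1) / J * ((N / b) * ((N * d) / b\<^sup>2) ^ j)"
    using N b J by (simp add: field_simps power2_eq_square power_mult_distrib power_add)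
  ultimately show ?thesis unfolding J_def by linarith
qed

lemma prob_connected_le_no_isolated:
  assumes "2 \<le> m" "2 \<le> n"
  shows "measure_pmf.prob (RIG n m 2) {F. rig_connected n F} \<le>
    card {F\<in>colour_assignments n m 2. isolated_count n F = 0} / card (colour_assignments n m 2)"
proof -
  have "colour_assignments n m 2 \<inter> {F. rig_connected n F} \<subseteq> {F\<in>colour_assignments n m 2. isolated_count n F = 0}"
  proof
    fix F assume F: "F \<in> colour_assignments n m 2 \<inter> {F. rig_connected n F}"
    then have "\<forall>v<n. \<not> isolated n F v" using isolated_imp_disconnected[OF assms(2)] by blast
    then show "F \<in> {F\<in>colour_assignments n m 2. isolated_count n F = 0}"
      using F unfolding isolated_count_def by simp
  qed
  then have "card (colour_assignments n m 2 \<inter> {F. rig_connected n F}) \<le>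
      card {F\<in>colour_assignments n m 2. isolated_count n F = 0}"
    by (intro card_mono) (simp add: finite_colour_assignments)
  then show ?thesis using assms by (simp add: prob_RIG divide_right_mono)
qed

lemma prob_disconnected_ge:
  assumes m: "4 \<le> m" and n: "2 \<le> n"
  shows "2 - real (m choose 2) / real ((m - 2) choose 2)
           - real (m choose 2) ^ (n - 1) / (real n * real ((m - 2) choose 2) ^ (n - 1))
         \<le> measure_pmf.prob (RIG n m 2) {F. \<not> rig_connected n F}"
proof -
  let ?\<Omega> = "colour_assignments n m 2"
  let ?Z = "{F\<in>?\<Omega>. isolated_count n F = 0}"
  define N where "N = real (m choose 2)"
  define b where "b = real ((m - 2) choose 2)"
  define d where "d = real ((m - 4) choose 2)"
  define S1 where "S1 = (\<Sum>F\<in>?\<Omega>. isolated_count n F)"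
  define S2 where "S2 = (\<Sum>F\<in>?\<Omega>. (isolated_count n F)\<^sup>2)"
  obtain j where j: "n = j + 2" using n by (metis add.commute le_iff_add)
  have N: "0 < N" and b: "0 < b" unfolding N_def b_def using m by (simp_all add: zero_less_binomial_iff)
  have card_\<Omega>: "real (card ?\<Omega>) = N ^ n" unfolding N_def by (simp add: card_colour_assignments)
  have S1: "S1 = real n * (N * b ^ (n - 1))" unfolding S1_def N_def b_def by (rule sum_isolated_count)
  have "measure_pmf.prob (RIG n m 2) {F. rig_connected n F} \<le> real (card ?Z) / N ^ n"
    using prob_connected_le_no_isolated[of m n] m n card_\<Omega> by simp
  also have "\<dots> \<le> N ^ n * S2 / S1\<^sup>2 - 1"
  proof -
    have "0 < S1" unfolding S1 using n N b by simp
    moreover have "real (card ?Z) * S1\<^sup>2 \<le> N ^ n * (N ^ n * S2 - S1\<^sup>2)"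
      using card_zeros_mul_sq_sum_le[OF finite_colour_assignments[of n m 2], where X = "isolated_count n"]
      unfolding S1_def S2_def card_\<Omega> .
    ultimately show ?thesis using N by (simp add: field_simps)
  qed
  also have "N ^ n * S2 / S1\<^sup>2 \<le> N ^ (n - 1) / (real n * b ^ (n - 1)) + N / b"
  proof -
    have "N * d \<le> b\<^sup>2" unfolding N_def b_def d_def by (rule choose_two_mul_le_sq[OF m])
    from isolated_moment_ratio_le[OF N b _ this, of j]
    show ?thesis
      unfolding S1 S2_def sum_isolated_count_sq N_def b_def d_def j by (simp add: algebra_simps)
  qed
  finally show ?thesis
    using prob_Collect_eq_1_minus[of "RIG n m 2" "rig_connected n"] unfolding N_def b_def by linarith
qed

lemma isolated_expectation_inverse_le:
  assumes m: "6 \<le> m" and n: "2 \<le> n" and D: "4 * real n / real m \<le> ln (real n)"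
    and big: "4 * (ln (real n))\<^sup>2 \<le> real n"
  shows "real (m choose 2) ^ (n - 1) / (real n * real ((m - 2) choose 2) ^ (n - 1))
         \<le> exp (1 - (ln (real n) - 4 * real n / real m))"
proof -
  define R where "R = real (m choose 2) / real ((m - 2) choose 2)"
  have b: "0 < real ((m - 2) choose 2)" using m by (simp add: zero_less_binomial_iff)
  have R: "0 < R" unfolding R_def using m b by (simp add: zero_less_binomial_iff)
  have "R - 1 \<le> 4 / real m + 56 / (real m)\<^sup>2"
    unfolding R_def using m choose_two_shift_ratio choose_two_shift_ratio_sub_one_le[of "real m"] by simp
  moreover have "56 * real n / (real m)\<^sup>2 \<le> 1"
  proof -
    \<comment> \<open>m \<ge> 4n / ln n and ln n \<le> sqrt n / 2 give m^2 \<ge> 64 n.\<close>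
    have "(4 * real n)\<^sup>2 \<le> (ln (real n) * real m)\<^sup>2" using D m by (intro power_mono) (auto simp: field_simps)
    also have "\<dots> = (ln (real n))\<^sup>2 * (real m)\<^sup>2" by (simp add: power_mult_distrib)
    also have "\<dots> \<le> (real n / 4) * (real m)\<^sup>2" using big by (intro mult_right_mono) auto
    finally show ?thesis using n m by (simp add: power2_eq_square field_simps)
  qed
  ultimately have "real (n - 1) * ln R \<le> 4 * real n / real m + 1"
  proof -
    assume y: "R - 1 \<le> 4 / real m + 56 / (real m)\<^sup>2" and small: "56 * real n / (real m)\<^sup>2 \<le> 1"
    have "ln R \<le> R - 1" using R by (rule ln_le_minus_one)
    moreover have "0 \<le> ln R" using R m unfolding R_def by (simp add: binomial_right_mono)
    ultimately have "real (n - 1) * ln R \<le> real n * (4 / real m + 56 / (real m)\<^sup>2)"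
      using y by (intro mult_mono) auto
    also have "\<dots> = 4 * real n / real m + 56 * real n / (real m)\<^sup>2" by (simp add: algebra_simps)
    finally show ?thesis using small by linarith
  qed
  moreover have "R ^ (n - 1) = exp (real (n - 1) * ln R)" using R by (simp add: exp_of_nat_mult)
  ultimately have "R ^ (n - 1) \<le> exp (4 * real n / real m + 1)" by simp
  then have "R ^ (n - 1) / real n \<le> exp (4 * real n / real m + 1) / exp (ln (real n))"
    using n by (simp add: divide_right_mono)
  also have "\<dots> = exp (1 - (ln (real n) - 4 * real n / real m))" by (simp add: exp_diff[symmetric])
  finally show ?thesis unfolding R_def by (simp add: power_divide field_simps)
qed

lemma filterlim_colours_at_top:
  fixes m :: "nat \<Rightarrow> nat"
  assumes "\<forall>n. 0 < m n" "\<forall>\<^sub>F n in sequentially. 4 * real n / real (m n) \<le> ln (real n)"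
  shows "filterlim (\<lambda>n. real (m n)) at_top sequentially"
proof (rule filterlim_at_top_mono)
  show "filterlim (\<lambda>n::nat. 4 * real n / ln (real n)) at_top sequentially" by real_asymp
  show "\<forall>\<^sub>F n in sequentially. 4 * real n / ln (real n) \<le> real (m n)"
    using assms(2) eventually_ge_at_top[of 2]
  proof eventually_elim
    case (elim n)
    then have "0 < ln (real n)" "0 < real (m n)" using assms(1) by auto
    then show ?case using elim by (simp add: field_simps mult.commute)
  qed
qed

lemma prob_RIG_disconnected_tendsto_one:
  fixes m :: "nat \<Rightarrow> nat"
  assumes m: "\<forall>n. 2 \<le> m n"
    and D: "filterlim (\<lambda>n. ln (real n) - 4 * real n / real (m n)) at_top sequentially"
  shows "(\<lambda>n. measure_pmf.prob (RIG n (m n) 2) {F. \<not> rig_connected n F}) \<longlonglongrightarrow> 1"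
proof -
  define R where "R n = real (m n choose 2) / real ((m n - 2) choose 2)" for n
  define T where "T n = real (m n choose 2) ^ (n - 1) / (real n * real ((m n - 2) choose 2) ^ (n - 1))" for n
  have "\<forall>\<^sub>F n in sequentially. 0 \<le> ln (real n) - 4 * real n / real (m n)"
    using D unfolding filterlim_at_top by blast
  then have D_nonneg: "\<forall>\<^sub>F n in sequentially. 4 * real n / real (m n) \<le> ln (real n)"
    by eventually_elim simp
  have big: "\<forall>\<^sub>F n in sequentially. 4 * (ln (real n))\<^sup>2 \<le> real n" by real_asymp
  have n2: "\<forall>\<^sub>F n in sequentially. 2 \<le> n" by (rule eventually_ge_at_top)
  have m_lim: "filterlim (\<lambda>n. real (m n)) at_top sequentially"
  proof (rule filterlim_colours_at_top[OF _ D_nonneg])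
    show "\<forall>n. 0 < m n" using m by (metis le0 not_numeral_le_zero not_gr0)
  qed
  have m6: "\<forall>\<^sub>F n in sequentially. 6 \<le> m n"
  proof -
    have "\<forall>\<^sub>F n in sequentially. 6 \<le> real (m n)" using m_lim unfolding filterlim_at_top by blast
    then show ?thesis by eventually_elim simp
  qed
  have R: "R \<longlonglongrightarrow> 1"
  proof -
    have "((\<lambda>x::real. x * (x - 1) / ((x - 2) * (x - 3))) \<longlongrightarrow> 1) at_top" by real_asymp
    from filterlim_compose[OF this m_lim]
    show ?thesis
      by (rule Lim_transform_eventually)
        (use m6 in \<open>eventually_elim, simp add: R_def choose_two_shift_ratio\<close>)
  qed
  have T: "T \<longlonglongrightarrow> 0"
  proof (rule tendsto_sandwich[of "\<lambda>_. 0" _ _ "\<lambda>n. exp (1 - (ln (real n) - 4 * real n / real (m n)))"])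
    show "\<forall>\<^sub>F n in sequentially. T n \<le> exp (1 - (ln (real n) - 4 * real n / real (m n)))"
      using m6 n2 D_nonneg big
      by eventually_elim (unfold T_def, rule isolated_expectation_inverse_le)
    have "((\<lambda>x::real. exp (1 - x)) \<longlongrightarrow> 0) at_top" by real_asymp
    from filterlim_compose[OF this D]
    show "(\<lambda>n. exp (1 - (ln (real n) - 4 * real n / real (m n)))) \<longlonglongrightarrow> 0" by (simp add: o_def)
  qed (simp_all add: T_def)
  show ?thesis
  proof (rule tendsto_sandwich[of "\<lambda>n. 2 - R n - T n" _ _ "\<lambda>_. 1"])
    show "\<forall>\<^sub>F n in sequentially. 2 - R n - T n \<le> measure_pmf.prob (RIG n (m n) 2) {F. \<not> rig_connected n F}"
      using m6 n2 by eventually_elim (unfold R_def T_def, rule prob_disconnected_ge, simp_all)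
    show "(\<lambda>n. 2 - R n - T n) \<longlonglongrightarrow> 1"
      using tendsto_diff[OF tendsto_diff[OF tendsto_const[of 2] R] T] by simp
  qed simp_all
qed

theorem theorem3:
  fixes m :: "nat \<Rightarrow> nat"
  assumes "\<forall>n. 2 \<le> m n"
  shows "(filterlim (\<lambda>n. 4 * real n / real (m n) - ln (real n)) at_top sequentially \<longrightarrow>
            (\<lambda>n. measure_pmf.prob (RIG n (m n) 2) {F. rig_connected n F}) \<longlonglongrightarrow> 1)
       \<and> (filterlim (\<lambda>n. ln (real n) - 4 * real n / real (m n)) at_top sequentially \<longrightarrow>
            (\<lambda>n. measure_pmf.prob (RIG n (m n) 2) {F. \<not> rig_connected n F}) \<longlonglongrightarrow> 1)"
  using prob_RIG_connected_tendsto_one[OF assms] prob_RIG_disconnected_tendsto_one[OF assms] by blast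

end
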